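(* Let $\mathbf{F}\in[L^2(\mathbb{R}^2)]^2$ be supported in the bounded domain $\Omega$. Let $\mathcal{T}=\{\tau_1,\tau_2,\tau_3\}$ consist of three different complex numbers such that $\tau_2-\tau_1$ and $\tau_3-\tau_1$ are linearly independent (as vectors in $\mathbb{C}\cong\mathbb{R}^2$). Fix $\mathbf{z}\in\mathbb{R}^2\setminus\overline\Omega$ and $\mathbf{q}\in\mathbb{S}$. Then $\mathbf{F}$ is uniquely determined (among sources supported in $\Omega$) by the phaseless data sets $$\mathcal{D}_p=\{|u^\infty_{\mathbf{F}\cup\{\mathbf{z}\},p}(\hat{\mathbf{x}},\mathbf{q},\omega,\tau)|:\ \hat{\mathbf{x}}\in\mathbb{S}_{\mathbf{q}},\ \omega\in\mathbb{W},\ \tau\in\mathcal{T}\}$$ and $$\mathcal{D}_s=\{|u^\infty_{\mathbf{F}\cup\{\mathbf{z}\},s}(\hat{\mathbf{x}},\mathbf{q},\omega,\tau)|:\ \hat{\mathbf{x}}\in\mathbb{S}^\perp_{\mathbf{q}},\ \omega\in\mathbb{W},\ \tau\in\mathcal{T}\}.$$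
   Context: $\mathbb{W}=(\omega_{min},\omega_{max})$, $0<\omega_{min}<\omega_{max}$; Lamé constants $\mu>0$, $2\mu+\lambda>0$; $k_p=\omega/\sqrt{\lambda+2\mu}$, $k_s=\omega/\sqrt\mu$. $\mathbb{S}$ is the unit circle; $\hat{\mathbf{x}}^\perp$ is $\hat{\mathbf{x}}$ rotated anticlockwise by $\pi/2$. $\mathbb{S}_{\mathbf{q}}=\{\hat{\mathbf{x}}\in\mathbb{S}:\mathbf{q}\cdot\hat{\mathbf{x}}\ge 1/2\}$, $\mathbb{S}^\perp_{\mathbf{q}}=\{\hat{\mathbf{x}}\in\mathbb{S}:\mathbf{q}\cdot\hat{\mathbf{x}}^\perp\ge 1/2\}$. Source far fields: $u^\infty_{\mathbf{F},p}(\hat{\mathbf{x}},\omega)=\int_{\mathbb{R}^2}e^{-ik_p\hat{\mathbf{x}}\cdot\mathbf{y}}\hat{\mathbf{x}}\cdot\mathbf{F}(\mathbf{y})d\mathbf{y}$, $u^\infty_{\mathbf{F},s}(\hat{\mathbf{x}},\omega)=\int_{\mathbb{R}^2}e^{-ik_s\hat{\mathbf{x}}\cdot\mathbf{y}}\hat{\mathbf{x}}^\perp\cdot\mathbf{F}(\mathbf{y})d\mathbf{y}$; with an added point source, $u^\infty_{\mathbf{F}\cup\{\mathbf{z}\},p}(\hat{\mathbf{x}},\mathbf{q},\omega,\tau)=u^\infty_{\mathbf{F},p}(\hat{\mathbf{x}},\omega)+\tau e^{-ik_p\hat{\mathbf{x}}\cdot\mathbf{z}}\,\mathbf{q}\cdot\hat{\mathbf{x}}$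 and $u^\infty_{\mathbf{F}\cup\{\mathbf{z}\},s}(\hat{\mathbf{x}},\mathbf{q},\omega,\tau)=u^\infty_{\mathbf{F},s}(\hat{\mathbf{x}},\omega)+\tau e^{-ik_s\hat{\mathbf{x}}\cdot\mathbf{z}}\,\mathbf{q}\cdot\hat{\mathbf{x}}^\perp$. *)

theory Defs
  imports "HOL-Analysis.Analysis"
begin

definition perp :: "real^2 \<Rightarrow> real^2" where
  "perp x = vector [-(x$2), x$1]"

definition dotc :: "real^2 \<Rightarrow> complex^2 \<Rightarrow> complex" where
  "dotc a v = complex_of_real (a$1) * v$1 + complex_of_real (a$2) * v$2"

definition kp :: "real \<Rightarrow> real \<Rightarrow> real \<Rightarrow> real" where
  "kp mu lam \<omega> = \<omega> / sqrt (lam + 2 * mu)"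

definition ks :: "real \<Rightarrow> real \<Rightarrow> real" where
  "ks mu \<omega> = \<omega> / sqrt mu"

definition L2_field :: "(real^2 \<Rightarrow> complex^2) \<Rightarrow> bool" where
  "L2_field F \<longleftrightarrow> F \<in> borel_measurable lborel \<and> integrable lborel (\<lambda>y. (norm (F y))^2)"

definition uinf_p :: "real \<Rightarrow> real \<Rightarrow> (real^2 \<Rightarrow> complex^2) \<Rightarrow> real^2 \<Rightarrow> real \<Rightarrow> complex" where
  "uinf_p mu lam F x \<omega> =
     (LINT y|lborel. exp (- \<i> * complex_of_real (kp mu lam \<omega> * (x \<bullet> y))) * dotc x (F y))"

definition uinf_s :: "real \<Rightarrow> (real^2 \<Rightarrow> complex^2) \<Rightarrow> real^2 \<Rightarrow> real \<Rightarrow> complex" where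
  "uinf_s mu F x \<omega> =
     (LINT y|lborel. exp (- \<i> * complex_of_real (ks mu \<omega> * (x \<bullet> y))) * dotc (perp x) (F y))"

definition uinf_pz :: "real \<Rightarrow> real \<Rightarrow> (real^2 \<Rightarrow> complex^2) \<Rightarrow> real^2 \<Rightarrow> real^2 \<Rightarrow> real^2 \<Rightarrow> real \<Rightarrow> complex \<Rightarrow> complex" where
  "uinf_pz mu lam F z x q \<omega> \<tau> =
     uinf_p mu lam F x \<omega>
     + \<tau> * exp (- \<i> * complex_of_real (kp mu lam \<omega> * (x \<bullet> z))) * complex_of_real (q \<bullet> x)"

definition uinf_sz :: "real \<Rightarrow> (real^2 \<Rightarrow> complex^2) \<Rightarrow> real^2 \<Rightarrow> real^2 \<Rightarrow> real^2 \<Rightarrow> real \<Rightarrow> complex \<Rightarrow> complex" where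
  "uinf_sz mu F z x q \<omega> \<tau> =
     uinf_s mu F x \<omega>
     + \<tau> * exp (- \<i> * complex_of_real (ks mu \<omega> * (x \<bullet> z))) * complex_of_real (q \<bullet> perp x)"

definition S_q :: "real^2 \<Rightarrow> (real^2) set" where
  "S_q q = {x \<in> sphere 0 1. q \<bullet> x \<ge> 1/2}"

definition Sperp_q :: "real^2 \<Rightarrow> (real^2) set" where
  "Sperp_q q = {x \<in> sphere 0 1. q \<bullet> perp x \<ge> 1/2}"

end

theory Submission
  imports Defs "HOL-Complex_Analysis.Conformal_Mappings"
begin

(* With b = e^(-i k x.z) (q.x), which is nonzero on the
   arc S_q, the three moduli |a + tau b| (tau in T) determine a: |a + t b|^2 - |c + t b|^2 is an
   affine function of t in R^2 that vanishes at three affinely independent points only if a = c.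
   So the phaseless data determine the p- and s-far fields themselves on the two arcs.

   For G = F1 - F2 these far fields are Fourier integrals of x.G and x^perp.G along the ray through x.
   As G has compact support they are entire in the frequency, so vanishing on W kills all their
   Taylor coefficients, i.e. all moments of (x.y)^n x.G(y) and (x.y)^n x^perp.G(y). These are
   homogeneous polynomials in x vanishing on arcs, hence everywhere; since x and x^perp form a basis,
   all monomial moments of both components of G vanish, and by Stone-Weierstrass G = 0 a.e. *)

section \<open>Phase retrieval from three reference values\<close>

lemma eq_0_if_orthogonal_to_independent_pair:
  fixes w u v :: complex
  assumes indep: "\<forall>a b :: real. a *\<^sub>R u + b *\<^sub>R v = 0 \<longrightarrow> a = 0 \<and> b = 0"
    and "w \<bullet> u = 0" "w \<bullet> v = 0"
  shows "w = 0"
proof -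
  define det where "det = Re u * Im v - Im u * Re v"
  have "det \<noteq> 0"
  proof
    assume "det = 0"
    then have "Im v *\<^sub>R u + (- Im u) *\<^sub>R v = 0" "Re v *\<^sub>R u + (- Re u) *\<^sub>R v = 0"
      by (auto simp: complex_eq_iff det_def algebra_simps)
    then have "Im v = 0 \<and> - Im u = 0" "Re v = 0 \<and> - Re u = 0"
      using indep by blast+
    then have "1 *\<^sub>R u + 0 *\<^sub>R v = 0"
      by (simp add: complex_eq_iff)
    then show False
      using indep by auto
  qed
  moreover have "det * Re w = Im v * (w \<bullet> u) - Im u * (w \<bullet> v)"
    and "det * Im w = Re u * (w \<bullet> v) - Re v * (w \<bullet> u)"
    by (simp_all add: det_def inner_complex_def algebra_simps)
  ultimately show ?thesis
    using assms(2,3) by (simp add: complex_eq_iff)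
qed

lemma inner_mult_cnj: "(x :: complex) \<bullet> (t * b) = (x * cnj b) \<bullet> t"
  by (simp add: inner_complex_def algebra_simps)

lemma phase_retrieval:
  fixes a c b t1 t2 t3 :: complex
  assumes indep: "\<forall>\<alpha> \<beta> :: real. \<alpha> *\<^sub>R (t2 - t1) + \<beta> *\<^sub>R (t3 - t1) = 0 \<longrightarrow> \<alpha> = 0 \<and> \<beta> = 0"
    and "b \<noteq> 0"
    and eq: "\<And>t. t \<in> {t1, t2, t3} \<Longrightarrow> norm (a + t * b) = norm (c + t * b)"
  shows "a = c"
proof -
  define w where "w = (a - c) * cnj b"
  have affine: "(norm (a + t * b))\<^sup>2 - (norm (c + t * b))\<^sup>2 = (norm a)\<^sup>2 - (norm c)\<^sup>2 + 2 * (w \<bullet> t)" for t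
  proof -
    have "(norm (a + t * b))\<^sup>2 - (norm (c + t * b))\<^sup>2 = (norm a)\<^sup>2 - (norm c)\<^sup>2 + 2 * ((a - c) \<bullet> (t * b))"
      unfolding power2_norm_eq_inner
      by (simp add: inner_add_left inner_add_right inner_diff_left inner_commute[of "t * b" a]
          inner_commute[of "t * b" c])
    then show ?thesis
      by (simp only: inner_mult_cnj w_def)
  qed
  have const: "2 * (w \<bullet> t) = (norm c)\<^sup>2 - (norm a)\<^sup>2" if "t \<in> {t1, t2, t3}" for t
  proof -
    have "(norm (a + t * b))\<^sup>2 = (norm (c + t * b))\<^sup>2"
      using eq[OF that] by (rule arg_cong)
    then show ?thesis
      using affine[of t] by linarith
  qed
  have "w \<bullet> (t2 - t1) = 0" "w \<bullet> (t3 - t1) = 0"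
    using const[of t1] const[of t2] const[of t3] by (simp_all add: inner_diff_right)
  then have "w = 0"
    by (rule eq_0_if_orthogonal_to_independent_pair[OF indep])
  then show ?thesis
    using \<open>b \<noteq> 0\<close> by (simp add: w_def)
qed

section \<open>Fourier integrals of compactly supported functions\<close>

lemma entire_eq_0_if_eq_0_on_interval:
  fixes f :: "complex \<Rightarrow> complex"
  assumes holo: "f holomorphic_on UNIV" and "a < b"
    and zero: "\<And>t. a < t \<Longrightarrow> t < b \<Longrightarrow> f (of_real t) = 0"
  shows "f z = 0"
proof (rule analytic_continuation[OF holo open_UNIV connected_UNIV subset_UNIV])
  have "a islimpt complex_of_real -` (complex_of_real ` {a<..<b}) \<inter> UNIV"
    using islimpt_greaterThanLessThan1[OF \<open>a < b\<close>] by (simp add: inj_vimage_image_eq inj_of_real)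
  then show "complex_of_real a islimpt complex_of_real ` {a<..<b}"
    by (rule islimpt_image) (auto intro: continuous_on_of_real continuous_on_id)
  show "f w = 0" if "w \<in> complex_of_real ` {a<..<b}" for w
    using that zero by auto
qed auto

lemma powser_coeff_eq_0_if_sums_0:
  fixes c :: "nat \<Rightarrow> complex"
  assumes sums_0: "\<And>z. (\<lambda>n. c n * z ^ n) sums 0"
  shows "c m = 0"
proof (rule ccontr)
  assume "c m \<noteq> 0"
  have "m > 0"
    using sums_0[of 0] \<open>c m \<noteq> 0\<close> by (auto simp: sums_iff intro: gr0I)
  show False
  proof (rule powser_0_nonzero[where r = 1 and \<xi> = 0 and f = "\<lambda>_. 0" and a = c and m = m])
    fix r :: real
    assume "0 < r" and "\<And>z::complex. z \<in> cball 0 r - {0} \<Longrightarrow> 0 \<noteq> 0"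
    moreover have "complex_of_real r \<in> cball 0 r - {0}"
      using \<open>0 < r\<close> by simp
    ultimately show False
      by blast
  qed (use sums_0 \<open>c m \<noteq> 0\<close> \<open>m > 0\<close> in auto)
qed

lemma entire_powser_coeff_eq_0_if_eq_0_on_interval:
  fixes c :: "nat \<Rightarrow> complex"
  assumes summable: "\<And>z. summable (\<lambda>n. c n * z ^ n)" and "a < b"
    and zero: "\<And>t. a < t \<Longrightarrow> t < b \<Longrightarrow> (\<Sum>n. c n * of_real t ^ n) = 0"
  shows "c m = 0"
proof (rule powser_coeff_eq_0_if_sums_0)
  fix z :: complex
  have "(\<lambda>z. \<Sum>n. c n * z ^ n) holomorphic_on UNIV"
    using termdiffs_strong_converges_everywhere[OF summable]
    by (auto simp: holomorphic_on_def field_differentiable_def intro: has_field_derivative_at_within)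
  then have "(\<Sum>n. c n * z ^ n) = 0"
    using \<open>a < b\<close> zero by (rule entire_eq_0_if_eq_0_on_interval)
  then show "(\<lambda>n. c n * z ^ n) sums 0"
    using summable_sums[OF summable] by metis
qed

lemma power_abs_mult_norm_le:
  fixes v :: "'a::real_normed_vector" and x :: real
  assumes "v \<noteq> 0 \<Longrightarrow> \<bar>x\<bar> \<le> R"
  shows "\<bar>x\<bar> ^ n * norm v \<le> \<bar>R\<bar> ^ n * norm v"
proof (cases "v = 0")
  case False
  then have "\<bar>x\<bar> \<le> \<bar>R\<bar>"
    using assms by linarith
  then show ?thesis
    by (intro mult_right_mono power_mono) simp_all
qed simp

lemma integrable_power_mult_if_bounded_on_support:
  fixes h :: "'a \<Rightarrow> complex" and s :: "'a \<Rightarrow> real"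
  assumes h: "integrable M h" and [measurable]: "s \<in> borel_measurable M"
    and bound: "\<And>y. y \<in> space M \<Longrightarrow> h y \<noteq> 0 \<Longrightarrow> \<bar>s y\<bar> \<le> R"
  shows "integrable M (\<lambda>y. of_real (s y) ^ n * h y)"
proof (rule Bochner_Integration.integrable_bound)
  show "integrable M (\<lambda>y. \<bar>R\<bar> ^ n * norm (h y))"
    using h by simp
  show "(\<lambda>y. of_real (s y) ^ n * h y) \<in> borel_measurable M"
    using borel_measurable_integrable[OF h] by measurable
  show "AE y in M. norm (of_real (s y) ^ n * h y) \<le> norm (\<bar>R\<bar> ^ n * norm (h y))"
    using power_abs_mult_norm_le[of "h y" "s y" R n for y] bound
    by (intro AE_I2) (simp add: norm_mult norm_power)
qed

lemma sums_integral_if_exp_dominated: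
  fixes F :: "nat \<Rightarrow> 'a \<Rightarrow> 'b::{banach, second_countable_topology}"
  assumes F: "\<And>n. integrable M (F n)" and g: "integrable M g"
    and dominated: "\<And>n y. y \<in> space M \<Longrightarrow> norm (F n y) \<le> a ^ n / fact n * g y"
  shows "(\<lambda>n. integral\<^sup>L M (F n)) sums (\<integral>y. (\<Sum>n. F n y) \<partial>M)"
proof (rule sums_integral[OF F])
  have exp_summable: "summable (\<lambda>n. a ^ n / fact n * K)" for K
    using summable_exp[of a] by (intro summable_mult2) (simp add: field_simps)
  show "AE y in M. summable (\<lambda>n. norm (F n y))"
  proof (rule AE_I2)
    fix y assume "y \<in> space M"
    show "summable (\<lambda>n. norm (F n y))"
      by (rule summable_comparison_test'[OF exp_summable[of "g y"]]) (use dominated[OF \<open>y \<in> space M\<close>] in simp)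
  qed
  show "summable (\<lambda>n. \<integral>y. norm (F n y) \<partial>M)"
  proof (rule summable_comparison_test'[OF exp_summable[of "\<integral>y. g y \<partial>M"]])
    fix n
    have "(\<integral>y. norm (F n y) \<partial>M) \<le> (\<integral>y. a ^ n / fact n * g y \<partial>M)"
      using dominated F g by (intro integral_mono) auto
    then show "norm (\<integral>y. norm (F n y) \<partial>M) \<le> a ^ n / fact n * (\<integral>y. g y \<partial>M)"
      by simp
  qed
qed

lemma integral_exp_mult_sums:
  fixes h :: "'a \<Rightarrow> complex" and s :: "'a \<Rightarrow> real"
  assumes h: "integrable M h" and s: "s \<in> borel_measurable M"
    and bound: "\<And>y. y \<in> space M \<Longrightarrow> h y \<noteq> 0 \<Longrightarrow> \<bar>s y\<bar> \<le> R"
  shows "(\<lambda>n. ((- \<i>) ^ n / fact n * (LINT y|M. of_real (s y) ^ n * h y)) * z ^ n)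
           sums (LINT y|M. exp (- \<i> * z * of_real (s y)) * h y)"
proof -
  define F where "F n y = (- \<i> * z * of_real (s y)) ^ n /\<^sub>R fact n * h y" for n y
  have F_eq: "F n y = ((- \<i>) ^ n / fact n * z ^ n) * (of_real (s y) ^ n * h y)" for n y
    unfolding F_def power_mult_distrib scaleR_conv_of_real by (simp add: divide_inverse mult_ac)
  have F_int: "integrable M (F n)" for n
    unfolding F_eq using integrable_power_mult_if_bounded_on_support[OF h s bound] by simp
  have norm_F: "norm (F n y) \<le> (norm z * \<bar>R\<bar>) ^ n / fact n * norm (h y)" if "y \<in> space M" for n y
  proof -
    have "norm (F n y) = norm z ^ n / fact n * (\<bar>s y\<bar> ^ n * norm (h y))"
      by (simp add: F_def norm_mult norm_power power_mult_distrib divide_inverse mult_ac)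
    also have "\<dots> \<le> norm z ^ n / fact n * (\<bar>R\<bar> ^ n * norm (h y))"
      using power_abs_mult_norm_le[of "h y" "s y" R n] bound[OF that] by (intro mult_left_mono) auto
    finally show ?thesis
      by (simp add: power_mult_distrib)
  qed
  have "(\<lambda>n. integral\<^sup>L M (F n)) sums (LINT y|M. (\<Sum>n. F n y))"
    using F_int integrable_norm[OF h] norm_F by (rule sums_integral_if_exp_dominated)
  moreover have "(\<Sum>n. F n y) = exp (- \<i> * z * of_real (s y)) * h y" for y
    using sums_mult2[OF exp_converges, of _ "h y"] unfolding F_def by (simp add: sums_iff)
  moreover have "integral\<^sup>L M (F n) = ((- \<i>) ^ n / fact n * (LINT y|M. of_real (s y) ^ n * h y)) * z ^ n" for n
    unfolding F_eq integral_mult_right_zero by (simp only: mult_ac)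
  ultimately show ?thesis
    by simp
qed

lemma moments_eq_0_if_fourier_eq_0_on_interval:
  fixes h :: "'a \<Rightarrow> complex" and s :: "'a \<Rightarrow> real"
  assumes h: "integrable M h" and s: "s \<in> borel_measurable M"
    and bound: "\<And>y. y \<in> space M \<Longrightarrow> h y \<noteq> 0 \<Longrightarrow> \<bar>s y\<bar> \<le> R"
    and "a < b"
    and zero: "\<And>t. a < t \<Longrightarrow> t < b \<Longrightarrow> (LINT y|M. exp (- \<i> * of_real (t * s y)) * h y) = 0"
  shows "(LINT y|M. of_real (s y) ^ n * h y) = 0"
proof -
  note sums = integral_exp_mult_sums[OF h s bound]
  have "(- \<i>) ^ n / fact n * (LINT y|M. of_real (s y) ^ n * h y) = 0"
  proof (rule entire_powser_coeff_eq_0_if_eq_0_on_interval[OF _ \<open>a < b\<close>])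
    show "summable (\<lambda>n. ((- \<i>) ^ n / fact n * (LINT y|M. of_real (s y) ^ n * h y)) * z ^ n)" for z
      using sums by (rule sums_summable)
    show "(\<Sum>n. ((- \<i>) ^ n / fact n * (LINT y|M. of_real (s y) ^ n * h y)) * of_real t ^ n) = 0"
      if "a < t" "t < b" for t
      using sums[of "of_real t"] zero[OF that] by (simp add: sums_iff mult.assoc)
  qed
  then show ?thesis
    by simp
qed

section \<open>Directional moments in the plane\<close>

lemma integrable_continuous_mult_bounded_support:
  fixes g :: "'a::euclidean_space \<Rightarrow> complex" and \<phi> :: "'a \<Rightarrow> complex"
  assumes g: "integrable lborel g" and S: "bounded S" and supp: "\<forall>y. y \<notin> S \<longrightarrow> g y = 0"
    and \<phi>: "continuous_on UNIV \<phi>"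
  shows "integrable lborel (\<lambda>y. \<phi> y * g y)"
proof -
  have "compact (\<phi> ` closure S)"
    using S \<phi> by (intro compact_continuous_image) (auto intro: continuous_on_subset simp: compact_closure)
  then obtain B where B: "\<forall>y\<in>closure S. norm (\<phi> y) \<le> B"
    by (auto dest!: compact_imp_bounded simp: bounded_iff)
  have bound: "norm (\<phi> y * g y) \<le> \<bar>B\<bar> * norm (g y)" for y
  proof (cases "y \<in> S")
    case True
    then have "norm (\<phi> y) \<le> \<bar>B\<bar>"
      using B closure_subset by fastforce
    then show ?thesis
      by (simp add: norm_mult mult_right_mono)
  qed (use supp in simp)
  show ?thesis
  proof (rule Bochner_Integration.integrable_bound[where f = "\<lambda>y. \<bar>B\<bar> * norm (g y)"])
    show "integrable lborel (\<lambda>y. \<bar>B\<bar> * norm (g y))"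
      using g by simp
    show "(\<lambda>y. \<phi> y * g y) \<in> borel_measurable lborel"
      using borel_measurable_continuous_onI[OF \<phi>] borel_measurable_integrable[OF g] by measurable
  qed (use bound in simp)
qed

definition monomial_moment :: "(real^2 \<Rightarrow> complex) \<Rightarrow> nat \<Rightarrow> nat \<Rightarrow> complex" where
  "monomial_moment g i j = (LINT y|lborel. of_real ((y$1) ^ i * (y$2) ^ j) * g y)"

definition binomial_form :: "(nat \<Rightarrow> nat \<Rightarrow> complex) \<Rightarrow> nat \<Rightarrow> complex \<Rightarrow> complex \<Rightarrow> complex" where
  "binomial_form m n x1 x2 = (\<Sum>k\<le>n. of_nat (n choose k) * x1 ^ k * x2 ^ (n - k) * m k (n - k))"

lemma inner_vec2: "(x :: real^2) \<bullet> y = x$1 * y$1 + x$2 * y$2"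
  by (simp add: inner_vec_def sum_2)

lemma integral_inner_power_eq_binomial_form:
  fixes g :: "real^2 \<Rightarrow> complex"
  assumes g: "integrable lborel g" and S: "bounded S" and supp: "\<forall>y. y \<notin> S \<longrightarrow> g y = 0"
  shows "(LINT y|lborel. of_real (x \<bullet> y) ^ n * g y)
           = binomial_form (monomial_moment g) n (of_real (x$1)) (of_real (x$2))"
proof -
  define summand where "summand k y = (of_nat (n choose k) * of_real (x$1) ^ k * of_real (x$2) ^ (n - k))
      * (of_real ((y$1) ^ k * (y$2) ^ (n - k)) * g y)" for k y
  have "(LINT y|lborel. of_real (x \<bullet> y) ^ n * g y) = (LINT y|lborel. (\<Sum>k\<le>n. summand k y))"
    unfolding inner_vec2 of_real_add binomial_ring sum_distrib_right summand_def
    by (intro Bochner_Integration.integral_cong sum.cong) (simp_all add: power_mult_distrib mult_ac)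
  also have "\<dots> = (\<Sum>k\<le>n. LINT y|lborel. summand k y)"
    unfolding summand_def
    by (intro Bochner_Integration.integral_sum integrable_mult_right
        integrable_continuous_mult_bounded_support[OF g S supp] continuous_intros)
  also have "\<dots> = binomial_form (monomial_moment g) n (of_real (x$1)) (of_real (x$2))"
    unfolding binomial_form_def monomial_moment_def summand_def integral_mult_right_zero ..
  finally show ?thesis .
qed

lemma cos_ge_half: "\<bar>\<theta>\<bar> < pi / 3 \<Longrightarrow> cos \<theta> \<ge> 1 / 2"
  using cos_monotone_0_pi_le[of "\<bar>\<theta>\<bar>" "pi / 3"] by (simp add: cos_60)

lemma vector_cos_sin_in_sphere: "vector [cos \<theta>, sin \<theta>] \<in> sphere (0 :: real^2) 1"
  by (simp add: norm_eq_sqrt_inner inner_vec2 flip: power2_eq_square)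

lemma cos_sin_in_S_q:
  assumes "v = vector [cos \<alpha>, sin \<alpha>]" and "\<bar>\<theta> - \<alpha>\<bar> < pi / 3"
  shows "vector [cos \<theta>, sin \<theta>] \<in> S_q v"
  using vector_cos_sin_in_sphere cos_ge_half[OF assms(2)]
  by (simp add: S_q_def assms(1) inner_vec2 cos_diff mult.commute)

lemma homogeneous_eq_0_if_eq_0_on_arc:
  fixes f :: "complex \<Rightarrow> complex \<Rightarrow> complex" and v :: "real^2"
  assumes holo: "(\<lambda>w. f (cos w) (sin w)) holomorphic_on UNIV"
    and hom: "\<And>r x1 x2. f (of_real r * x1) (of_real r * x2) = of_real r ^ N * f x1 x2"
    and v: "v \<in> sphere 0 1"
    and zero: "\<And>x. x \<in> S_q v \<Longrightarrow> f (of_real (x$1)) (of_real (x$2)) = 0"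
  shows "f (of_real x1) (of_real x2) = 0"
proof -
  have "(v$1)\<^sup>2 + (v$2)\<^sup>2 = 1"
    using v by (simp add: norm_eq_1 inner_vec2 power2_eq_square)
  then obtain \<alpha> where "v$1 = cos \<alpha>" "v$2 = sin \<alpha>"
    using sincos_total_2pi_le by blast
  then have v_eq: "v = vector [cos \<alpha>, sin \<alpha>]"
    by (simp add: vec_eq_iff forall_2)
  have circle: "f (cos w) (sin w) = 0" for w
  proof (rule entire_eq_0_if_eq_0_on_interval[OF holo, of "\<alpha> - pi / 3" "\<alpha> + pi / 3"])
    fix \<theta> assume "\<alpha> - pi / 3 < \<theta>" "\<theta> < \<alpha> + pi / 3"
    then have "\<bar>\<theta> - \<alpha>\<bar> < pi / 3"
      unfolding abs_less_iff by linarith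
    then have "vector [cos \<theta>, sin \<theta>] \<in> S_q v"
      by (rule cos_sin_in_S_q[OF v_eq])
    then show "f (cos (of_real \<theta>)) (sin (of_real \<theta>)) = 0"
      using zero by (force simp: cos_of_real sin_of_real vector_2)
  qed simp
  obtain r t where "x1 = r * cos t" "x2 = r * sin t"
    using polar_Ex by blast
  then have "f (of_real x1) (of_real x2) = of_real r ^ N * f (cos (of_real t)) (sin (of_real t))"
    by (simp add: cos_of_real sin_of_real flip: hom)
  then show ?thesis
    by (simp add: circle)
qed

lemma binomial_form_scale: "binomial_form m n (r * x1) (r * x2) = r ^ n * binomial_form m n x1 x2"
  unfolding binomial_form_def sum_distrib_left
proof (intro sum.cong refl)
  fix k assume "k \<in> {..n}"
  then have "r ^ k * r ^ (n - k) = r ^ n"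
    by (simp flip: power_add)
  then show "of_nat (n choose k) * (r * x1) ^ k * (r * x2) ^ (n - k) * m k (n - k)
      = r ^ n * (of_nat (n choose k) * x1 ^ k * x2 ^ (n - k) * m k (n - k))"
    by (simp add: power_mult_distrib mult_ac flip: \<open>r ^ k * r ^ (n - k) = r ^ n\<close>)
qed

lemma binomial_form_coeff_eq_0:
  assumes zero: "\<And>s :: real. binomial_form m n (of_real s) 1 = 0" and "k \<le> n"
  shows "m k (n - k) = 0"
proof -
  define c where "c i = of_nat (n choose i) * m i (n - i)" for i
  have "range complex_of_real \<subseteq> {z. (\<Sum>i\<le>n. c i * z ^ i) = 0}"
    using zero by (auto simp: binomial_form_def c_def mult_ac)
  moreover have "infinite (range complex_of_real)"
    using finite_imageD[of complex_of_real UNIV] inj_of_real infinite_UNIV_char_0 by auto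
  ultimately have "\<forall>i\<le>n. c i = 0"
    using polyfun_finite_roots[of c n] infinite_super by blast
  then show ?thesis
    using \<open>k \<le> n\<close> by (simp add: c_def)
qed

lemma norm_perp: "norm (perp x) = norm x"
  by (simp add: perp_def norm_eq_sqrt_inner inner_vec2 vector_2 algebra_simps)

lemma Sperp_q_eq_S_q: "Sperp_q q = S_q (- perp q)"
  by (auto simp: Sperp_q_def S_q_def perp_def inner_vec2 vector_2 algebra_simps)

lemma eq_0_if_rotation_system_eq_0:
  fixes p p' :: complex and s :: real
  assumes "of_real s * p + p' = 0" and "- p + of_real s * p' = 0"
  shows "p = 0" and "p' = 0"
proof -
  have "of_real (s\<^sup>2 + 1) * p = of_real s * (of_real s * p + p') - (- p + of_real s * p')"
    and "of_real (s\<^sup>2 + 1) * p' = (of_real s * p + p') + of_real s * (- p + of_real s * p')"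
    by (simp_all add: algebra_simps power2_eq_square)
  moreover have "of_real (s\<^sup>2 + 1) \<noteq> (0 :: complex)"
    using zero_le_power2[of s] by (simp only: of_real_eq_0_iff)
  ultimately show "p = 0" and "p' = 0"
    using assms by simp_all
qed

lemma binomial_form_pair_coeffs_eq_0_if_eq_0_on_arcs:
  fixes m m' :: "nat \<Rightarrow> nat \<Rightarrow> complex" and q :: "real^2"
  assumes q: "q \<in> sphere 0 1"
    and zero_p: "\<And>x. x \<in> S_q q \<Longrightarrow>
      of_real (x$1) * binomial_form m n (of_real (x$1)) (of_real (x$2))
      + of_real (x$2) * binomial_form m' n (of_real (x$1)) (of_real (x$2)) = 0"
    and zero_s: "\<And>x. x \<in> Sperp_q q \<Longrightarrow>
      - of_real (x$2) * binomial_form m n (of_real (x$1)) (of_real (x$2))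
      + of_real (x$1) * binomial_form m' n (of_real (x$1)) (of_real (x$2)) = 0"
    and "k \<le> n"
  shows "m k (n - k) = 0" and "m' k (n - k) = 0"
proof -
  \<comment> \<open>\<open>A\<close> and \<open>B\<close> are the components of the pair of forms in the frame \<open>(x, perp x)\<close>; they vanish on
    the whole plane, and at \<open>x = (s, 1)\<close> the frame is invertible.\<close>
  have A: "of_real u * binomial_form m n (of_real u) (of_real v)
      + of_real v * binomial_form m' n (of_real u) (of_real v) = 0" for u v
  proof (rule homogeneous_eq_0_if_eq_0_on_arc[where N = "Suc n" and v = q
      and f = "\<lambda>x1 x2. x1 * binomial_form m n x1 x2 + x2 * binomial_form m' n x1 x2", OF _ _ q])
    show "(\<lambda>w. cos w * binomial_form m n (cos w) (sin w) + sin w * binomial_form m' n (cos w) (sin w))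
        holomorphic_on UNIV"
      unfolding binomial_form_def by (intro holomorphic_intros)
    show "\<And>x. x \<in> S_q q \<Longrightarrow> of_real (x$1) * binomial_form m n (of_real (x$1)) (of_real (x$2))
        + of_real (x$2) * binomial_form m' n (of_real (x$1)) (of_real (x$2)) = 0"
      by (rule zero_p)
  qed (simp add: binomial_form_scale, simp add: algebra_simps)
  have "- perp q \<in> sphere 0 1"
    using q by (simp add: norm_perp)
  have B: "- of_real v * binomial_form m n (of_real u) (of_real v)
      + of_real u * binomial_form m' n (of_real u) (of_real v) = 0" for u v
  proof (rule homogeneous_eq_0_if_eq_0_on_arc[where N = "Suc n" and v = "- perp q"
      and f = "\<lambda>x1 x2. - x2 * binomial_form m n x1 x2 + x1 * binomial_form m' n x1 x2",
      OF _ _ \<open>- perp q \<in> sphere 0 1\<close>])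
    show "(\<lambda>w. - sin w * binomial_form m n (cos w) (sin w) + cos w * binomial_form m' n (cos w) (sin w))
        holomorphic_on UNIV"
      unfolding binomial_form_def by (intro holomorphic_intros)
    show "\<And>x. x \<in> S_q (- perp q) \<Longrightarrow> - of_real (x$2) * binomial_form m n (of_real (x$1)) (of_real (x$2))
        + of_real (x$1) * binomial_form m' n (of_real (x$1)) (of_real (x$2)) = 0"
      by (rule zero_s) (simp add: Sperp_q_eq_S_q)
  qed (simp add: binomial_form_scale, simp add: algebra_simps)
  have "binomial_form m n (of_real s) 1 = 0" and "binomial_form m' n (of_real s) 1 = 0" for s
  proof -
    have "of_real s * binomial_form m n (of_real s) 1 + binomial_form m' n (of_real s) 1 = 0"
      and "- binomial_form m n (of_real s) 1 + of_real s * binomial_form m' n (of_real s) 1 = 0"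
      using A[where u = s and v = 1] B[where u = s and v = 1] by simp_all
    then show "binomial_form m n (of_real s) 1 = 0" and "binomial_form m' n (of_real s) 1 = 0"
      by (rule eq_0_if_rotation_system_eq_0)+
  qed
  then show "m k (n - k) = 0" and "m' k (n - k) = 0"
    using \<open>k \<le> n\<close> by (simp_all add: binomial_form_coeff_eq_0)
qed

section \<open>Functions with vanishing moments\<close>

lemma min_infdist_tendsto_indicator:
  fixes U :: "'a::metric_space set"
  assumes "open U" and "U \<noteq> UNIV"
  shows "(\<lambda>n. min 1 (real n * infdist y (- U))) \<longlonglongrightarrow> indicator U y"
proof (cases "y \<in> U")
  case True
  then have "infdist y (- U) > 0"
    using assms by (intro infdist_pos_not_in_closed) auto
  then have "LIM n sequentially. real n * infdist y (- U) :> at_top"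
    by (intro filterlim_at_top_mult_tendsto_pos[OF tendsto_const _ filterlim_real_sequentially])
  then have "\<forall>\<^sub>F n in sequentially. 1 < real n * infdist y (- U)"
    by (simp add: filterlim_at_top_dense)
  then have "\<forall>\<^sub>F n in sequentially. min 1 (real n * infdist y (- U)) = indicator U y"
    by eventually_elim (use True in simp)
  then show ?thesis
    by (rule tendsto_eventually)
qed simp

lemma integral_indicator_open_eq_0_if_orthogonal_to_continuous:
  fixes g :: "'a::euclidean_space \<Rightarrow> complex"
  assumes g: "integrable lborel g"
    and orth: "\<And>\<phi>. continuous_on UNIV \<phi> \<Longrightarrow> \<forall>y. 0 \<le> \<phi> y \<and> \<phi> y \<le> 1
                  \<Longrightarrow> (LINT y|lborel. \<phi> y *\<^sub>R g y) = 0"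
    and U: "open U"
  shows "(LINT y|lborel. indicator U y *\<^sub>R g y) = 0"
proof (cases "U = UNIV")
  case True
  then show ?thesis
    using orth[of "\<lambda>_. 1"] by simp
next
  case False
  define \<phi> where "\<phi> n y = min 1 (real n * infdist y (- U))" for n :: nat and y
  have cont: "continuous_on UNIV (\<phi> n)" for n
    unfolding \<phi>_def by (intro continuous_intros)
  have range: "0 \<le> \<phi> n y \<and> \<phi> n y \<le> 1" for n y
    unfolding \<phi>_def by (auto simp: infdist_nonneg)
  have "(\<lambda>n. LINT y|lborel. \<phi> n y *\<^sub>R g y) \<longlonglongrightarrow> (LINT y|lborel. indicator U y *\<^sub>R g y)"
  proof (rule integral_dominated_convergence[where w = "\<lambda>y. norm (g y)"])
    show "(\<lambda>y. \<phi> n y *\<^sub>R g y) \<in> borel_measurable lborel" for n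
      using borel_measurable_continuous_onI[OF cont] borel_measurable_integrable[OF g] by measurable
    show "(\<lambda>y. indicator U y *\<^sub>R g y) \<in> borel_measurable lborel"
      using U borel_measurable_integrable[OF g]
      by (intro borel_measurable_scaleR borel_measurable_indicator) auto
    show "AE y in lborel. norm (\<phi> n y *\<^sub>R g y) \<le> norm (g y)" for n
      using range[of n] by (auto intro!: mult_left_le_one_le)
    show "AE y in lborel. (\<lambda>n. \<phi> n y *\<^sub>R g y) \<longlonglongrightarrow> indicator U y *\<^sub>R g y"
      unfolding \<phi>_def using min_infdist_tendsto_indicator[OF U False]
      by (intro AE_I2 tendsto_scaleR tendsto_const)
  qed (use g in simp)
  moreover have "(LINT y|lborel. \<phi> n y *\<^sub>R g y) = 0" for n
    using orth[OF cont] range by simp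
  ultimately show ?thesis
    by (simp add: LIMSEQ_const_iff)
qed

lemma AE_eq_0_if_orthogonal_to_continuous:
  fixes g :: "'a::euclidean_space \<Rightarrow> complex"
  assumes g: "integrable lborel g"
    and orth: "\<And>\<phi>. continuous_on UNIV \<phi> \<Longrightarrow> \<forall>y. 0 \<le> \<phi> y \<and> \<phi> y \<le> 1
                  \<Longrightarrow> (LINT y|lborel. \<phi> y *\<^sub>R g y) = 0"
  shows "AE y in lborel. g y = 0"
proof (rule sigma_finite_measure.density_zero[OF sigma_finite_lborel g])
  have open_0: "set_lebesgue_integral lborel U g = 0" if "open U" for U
    unfolding set_lebesgue_integral_def
    by (rule integral_indicator_open_eq_0_if_orthogonal_to_continuous[OF g _ that]) (rule orth)
  have integrable: "set_integrable lborel A g" if "A \<in> sigma_sets UNIV {S. open S}" for A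
    using that unfolding set_integrable_def by (intro integrable_mult_indicator g) (simp add: sets_borel)
  fix A :: "'a set"
  assume "A \<in> sets lborel"
  have "Int_stable {S :: 'a set. open S}"
    by (auto simp: Int_stable_def)
  moreover have "{S :: 'a set. open S} \<subseteq> Pow UNIV"
    by simp
  moreover have "A \<in> sigma_sets UNIV {S. open S}"
    using \<open>A \<in> sets lborel\<close> by (simp add: sets_borel)
  ultimately show "set_lebesgue_integral lborel A g = 0"
  proof (induction rule: sigma_sets_induct_disjoint)
    case (basic A)
    then show ?case
      by (simp add: open_0)
  next
    case empty
    then show ?case
      by (simp add: set_lebesgue_integral_def)
  next
    case (compl A)
    have "set_lebesgue_integral lborel (A \<union> (UNIV - A)) g
        = set_lebesgue_integral lborel A g + set_lebesgue_integral lborel (UNIV - A) g"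
      using compl.hyps by (intro set_integral_Un integrable sigma_sets.Compl) auto
    then show ?case
      using compl.IH open_0[OF open_UNIV] by simp
  next
    case (union A)
    have "set_lebesgue_integral lborel (\<Union>i. A i) g = (\<Sum>i. set_lebesgue_integral lborel (A i) g)"
    proof (rule lebesgue_integral_countable_add)
      show "A i \<in> sets lborel" for i
        using union.hyps(2) by (auto simp: sets_borel)
      show "A i \<inter> A j = {}" if "i \<noteq> j" for i j
        using union.hyps(1) that by (auto simp: disjoint_family_on_def)
      show "set_integrable lborel (\<Union>i. A i) g"
        using union.hyps(2) by (intro integrable sigma_sets.Union) auto
    qed
    then show ?case
      using union.IH by simp
  qed
qed

lemma linear_vec2:
  fixes f :: "real^2 \<Rightarrow> real"
  assumes "linear f"
  shows "f y = y$1 * f (axis 1 1) + y$2 * f (axis 2 1)"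
proof -
  have "y = y$1 *\<^sub>R axis 1 1 + y$2 *\<^sub>R axis 2 1"
    by (simp add: vec_eq_iff forall_2 axis_def)
  then have "f y = f (y$1 *\<^sub>R axis 1 1 + y$2 *\<^sub>R axis 2 1)"
    by (rule arg_cong)
  also have "\<dots> = y$1 * f (axis 1 1) + y$2 * f (axis 2 1)"
    using assms by (simp add: linear_add linear_scale)
  finally show ?thesis .
qed

lemma continuous_on_real_polynomial_function:
  "real_polynomial_function p \<Longrightarrow> continuous_on S p"
  by (simp add: continuous_at_imp_continuous_on continuous_real_polymonial_function)

lemma integrable_continuous_mult_bounded_support_real:
  fixes g :: "'a::euclidean_space \<Rightarrow> complex"
  assumes g: "integrable lborel g" and S: "bounded S" and supp: "\<forall>y. y \<notin> S \<longrightarrow> g y = 0"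
    and r: "continuous_on UNIV r"
  shows "integrable lborel (\<lambda>y. of_real (r y) * g y)"
  using r by (intro integrable_continuous_mult_bounded_support[OF g S supp] continuous_intros)

lemma monomial_moment_linear_mult:
  fixes g :: "real^2 \<Rightarrow> complex"
  assumes f: "linear f"
    and g: "integrable lborel g" and S: "bounded S" and supp: "\<forall>y. y \<notin> S \<longrightarrow> g y = 0"
  shows "monomial_moment (\<lambda>y. of_real (f y) * g y) i j
    = of_real (f (axis 1 1)) * monomial_moment g (Suc i) j + of_real (f (axis 2 1)) * monomial_moment g i (Suc j)"
proof -
  let ?mono = "\<lambda>i j y. of_real ((y$1) ^ i * (y$2) ^ j) * g y"
  have int: "integrable lborel (?mono i j)" for i j
    by (rule integrable_continuous_mult_bounded_support_real[OF g S supp]) (intro continuous_intros)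
  have "of_real ((y$1) ^ i * (y$2) ^ j) * (of_real (f y) * g y)
      = of_real (f (axis 1 1)) * ?mono (Suc i) j y + of_real (f (axis 2 1)) * ?mono i (Suc j) y" for y
    using linear_vec2[OF f, of y] by (simp add: algebra_simps)
  then have "monomial_moment (\<lambda>y. of_real (f y) * g y) i j
      = (LINT y|lborel. of_real (f (axis 1 1)) * ?mono (Suc i) j y + of_real (f (axis 2 1)) * ?mono i (Suc j) y)"
    unfolding monomial_moment_def by presburger
  also have "\<dots> = of_real (f (axis 1 1)) * monomial_moment g (Suc i) j
      + of_real (f (axis 2 1)) * monomial_moment g i (Suc j)"
    unfolding monomial_moment_def
    by (subst Bochner_Integration.integral_add; (intro integrable_mult_right int)?; simp)
  finally show ?thesis .
qed

lemma monomial_moment_add_mult: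
  fixes g :: "real^2 \<Rightarrow> complex"
  assumes g: "integrable lborel g" and S: "bounded S" and supp: "\<forall>y. y \<notin> S \<longrightarrow> g y = 0"
    and "continuous_on UNIV r" and "continuous_on UNIV r'"
  shows "monomial_moment (\<lambda>y. of_real (r y + r' y) * g y) i j
    = monomial_moment (\<lambda>y. of_real (r y) * g y) i j + monomial_moment (\<lambda>y. of_real (r' y) * g y) i j"
proof -
  have int: "integrable lborel (\<lambda>y. of_real ((y$1) ^ i * (y$2) ^ j) * (of_real (s y) * g y))"
    if "continuous_on UNIV s" for s
  proof -
    have "continuous_on UNIV (\<lambda>y. (y$1) ^ i * (y$2) ^ j * s y)"
      using that by (intro continuous_intros)
    from integrable_continuous_mult_bounded_support_real[OF g S supp this]
    show ?thesis
      by (simp add: mult.assoc)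
  qed
  have "monomial_moment (\<lambda>y. of_real (r y + r' y) * g y) i j
      = (LINT y|lborel. of_real ((y$1) ^ i * (y$2) ^ j) * (of_real (r y) * g y)
                      + of_real ((y$1) ^ i * (y$2) ^ j) * (of_real (r' y) * g y))"
    unfolding monomial_moment_def by (simp add: algebra_simps)
  also have "\<dots> = monomial_moment (\<lambda>y. of_real (r y) * g y) i j + monomial_moment (\<lambda>y. of_real (r' y) * g y) i j"
    unfolding monomial_moment_def using int[OF assms(4)] int[OF assms(5)] by (rule Bochner_Integration.integral_add)
  finally show ?thesis .
qed

lemma monomial_moments_polynomial_mult_eq_0:
  fixes g :: "real^2 \<Rightarrow> complex"
  assumes p: "real_polynomial_function p"
    and g: "integrable lborel g" and S: "bounded S" and supp: "\<forall>y. y \<notin> S \<longrightarrow> g y = 0"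
    and moments: "\<And>i j. monomial_moment g i j = 0"
  shows "monomial_moment (\<lambda>y. of_real (p y) * g y) i j = 0"
  \<comment> \<open>Generalising over \<open>g\<close> makes the product case an instance of the induction hypotheses.\<close>
  using p g supp moments
proof (induction p arbitrary: g i j rule: real_polynomial_function.induct)
  case (linear f)
  then show ?case
    by (simp add: monomial_moment_linear_mult[OF bounded_linear.linear[OF linear.hyps] _ S])
next
  case (const c)
  then show ?case
    by (simp add: monomial_moment_def mult.left_commute[of _ "of_real c"])
next
  case (add p q)
  have "monomial_moment (\<lambda>y. of_real (p y + q y) * g y) i j
      = monomial_moment (\<lambda>y. of_real (p y) * g y) i j + monomial_moment (\<lambda>y. of_real (q y) * g y) i j"
    using add.hyps by (intro monomial_moment_add_mult[OF add.prems(1) S add.prems(2)] continuous_on_real_polynomial_function)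
  then show ?case
    using add.IH add.prems by simp
next
  case (mult p q)
  have "integrable lborel (\<lambda>y. of_real (q y) * g y)"
    using continuous_on_real_polynomial_function[OF mult.hyps(2)]
    by (rule integrable_continuous_mult_bounded_support_real[OF mult.prems(1) S mult.prems(2)])
  moreover have "\<forall>y. y \<notin> S \<longrightarrow> of_real (q y) * g y = 0"
    using mult.prems(2) by simp
  ultimately have "monomial_moment (\<lambda>y. of_real (p y) * (of_real (q y) * g y)) i j = 0"
    by (rule mult.IH(1)) (rule mult.IH(2)[OF mult.prems])
  then show ?case
    by (simp add: mult.assoc)
qed

lemma norm_integral_continuous_mult_le_if_monomial_moments_eq_0:
  fixes g :: "real^2 \<Rightarrow> complex"
  assumes g: "integrable lborel g" and S: "bounded S" and supp: "\<forall>y. y \<notin> S \<longrightarrow> g y = 0"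
    and moments: "\<And>i j. monomial_moment g i j = 0"
    and \<phi>: "continuous_on UNIV \<phi>" and "e > 0"
  shows "norm (LINT y|lborel. of_real (\<phi> y) * g y) \<le> e * (LINT y|lborel. norm (g y))"
proof -
  obtain p where p: "real_polynomial_function p" and close: "\<And>y. y \<in> closure S \<Longrightarrow> \<bar>\<phi> y - p y\<bar> < e"
    using Stone_Weierstrass_real_polynomial_function[of "closure S" \<phi> e] S \<phi> \<open>e > 0\<close>
    by (metis compact_closure continuous_on_subset top_greatest)
  have int: "integrable lborel (\<lambda>y. of_real (r y) * g y)" if "continuous_on UNIV r" for r
    using that by (rule integrable_continuous_mult_bounded_support_real[OF g S supp])
  have "(LINT y|lborel. of_real (p y) * g y) = 0"
    using monomial_moments_polynomial_mult_eq_0[OF p g S supp moments, of 0 0]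
    by (simp add: monomial_moment_def)
  then have "(LINT y|lborel. of_real (\<phi> y) * g y) = (LINT y|lborel. of_real (\<phi> y - p y) * g y)"
    using int[OF \<phi>] int[OF continuous_on_real_polynomial_function[OF p]]
    by (simp add: left_diff_distrib Bochner_Integration.integral_diff)
  also have "norm \<dots> \<le> (LINT y|lborel. norm (of_real (\<phi> y - p y) * g y))"
    by (rule integral_norm_bound)
  also have "\<dots> \<le> (LINT y|lborel. e * norm (g y))"
  proof (rule integral_mono)
    show "integrable lborel (\<lambda>y. norm (of_real (\<phi> y - p y) * g y))"
      using \<phi> continuous_on_real_polynomial_function[OF p]
      by (intro integrable_norm int continuous_intros)
    show "norm (of_real (\<phi> y - p y) * g y) \<le> e * norm (g y)" for y
    proof (cases "y \<in> S")
      case True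
      then have "\<bar>\<phi> y - p y\<bar> \<le> e"
        using close closure_subset by fastforce
      then show ?thesis
        by (simp add: norm_mult mult_right_mono del: of_real_diff)
    qed (use supp in simp)
  qed (use g in simp)
  finally show ?thesis
    by simp
qed

lemma AE_eq_0_if_monomial_moments_eq_0:
  fixes g :: "real^2 \<Rightarrow> complex"
  assumes g: "integrable lborel g" and S: "bounded S" and supp: "\<forall>y. y \<notin> S \<longrightarrow> g y = 0"
    and moments: "\<And>i j. monomial_moment g i j = 0"
  shows "AE y in lborel. g y = 0"
proof (rule AE_eq_0_if_orthogonal_to_continuous[OF g])
  fix \<phi> :: "real^2 \<Rightarrow> real"
  assume \<phi>: "continuous_on UNIV \<phi>"
  define C where "C = (LINT y|lborel. norm (g y))"
  have "C \<ge> 0"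
    by (simp add: C_def)
  have "norm (LINT y|lborel. of_real (\<phi> y) * g y) \<le> 0"
  proof (rule field_le_epsilon)
    fix e :: real
    assume "e > 0"
    then have "e / (C + 1) > 0"
      using \<open>C \<ge> 0\<close> by simp
    then have "norm (LINT y|lborel. of_real (\<phi> y) * g y) \<le> e / (C + 1) * C"
      unfolding C_def by (rule norm_integral_continuous_mult_le_if_monomial_moments_eq_0[OF g S supp moments \<phi>])
    also have "\<dots> \<le> e"
      using \<open>e > 0\<close> \<open>C \<ge> 0\<close> by (simp add: field_simps)
    finally show "norm (LINT y|lborel. of_real (\<phi> y) * g y) \<le> 0 + e"
      by simp
  qed
  then show "(LINT y|lborel. \<phi> y *\<^sub>R g y) = 0"
    by (simp add: scaleR_conv_of_real)
qed

section \<open>Far fields of sources\<close>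

lemma norm_le_1_plus_power2: "norm v \<le> 1 + (norm v)\<^sup>2"
proof -
  have "0 \<le> (norm v - 1)\<^sup>2"
    by simp
  then show ?thesis
    unfolding power2_diff using norm_ge_zero[of v] by (simp; linarith)
qed

lemma integrable_nth_if_L2_field:
  fixes F :: "real^2 \<Rightarrow> complex^2"
  assumes L2: "L2_field F" and supp: "\<forall>y. y \<notin> \<Omega> \<longrightarrow> F y = 0"
    and \<Omega>: "\<Omega> \<in> sets lborel" "bounded \<Omega>"
  shows "integrable lborel (\<lambda>y. F y $ j)"
proof (rule Bochner_Integration.integrable_bound)
  have [measurable]: "F \<in> borel_measurable lborel"
    using L2 by (simp add: L2_field_def)
  show "integrable lborel (\<lambda>y. indicator \<Omega> y + (norm (F y))\<^sup>2)"
    using L2 \<Omega> by (intro Bochner_Integration.integrable_add integrable_real_indicator emeasure_bounded_finite)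
      (auto simp: L2_field_def)
  have "(\<lambda>v :: complex^2. v $ j) \<in> borel_measurable borel"
    by (intro borel_measurable_continuous_onI linear_continuous_on bounded_linear_vec_nth)
  then show "(\<lambda>y. F y $ j) \<in> borel_measurable lborel"
    by measurable
  have "norm (F y $ j) \<le> indicator \<Omega> y + (norm (F y))\<^sup>2" for y
    using Finite_Cartesian_Product.norm_nth_le[of "F y" j] norm_le_1_plus_power2[of "F y"] supp by (cases "y \<in> \<Omega>") auto
  then show "AE y in lborel. norm (F y $ j) \<le> norm (indicator \<Omega> y + (norm (F y))\<^sup>2 :: real)"
    by (intro AE_I2) (simp add: indicator_def)
qed

lemma dotc_diff: "dotc a (v - w) = dotc a v - dotc a w"
  by (simp add: dotc_def algebra_simps)

lemma integrable_dotc: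
  assumes "\<And>j. integrable M (\<lambda>y. F y $ j)"
  shows "integrable M (\<lambda>y. dotc a (F y))"
  unfolding dotc_def using assms by simp

lemma integrable_exp_mult:
  fixes h :: "'a \<Rightarrow> complex" and f :: "'a \<Rightarrow> real"
  assumes h: "integrable M h" and [measurable]: "f \<in> borel_measurable M"
  shows "integrable M (\<lambda>y. exp (- \<i> * of_real (f y)) * h y)"
proof (rule Bochner_Integration.integrable_bound[OF h])
  show "(\<lambda>y. exp (- \<i> * of_real (f y)) * h y) \<in> borel_measurable M"
    using borel_measurable_integrable[OF h] by measurable
qed (simp add: norm_mult norm_exp_eq_Re)

lemma uinf_p_diff:
  assumes "\<And>j. integrable lborel (\<lambda>y. F1 y $ j)" and "\<And>j. integrable lborel (\<lambda>y. F2 y $ j)"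
  shows "uinf_p mu lam (\<lambda>y. F1 y - F2 y) x \<omega> = uinf_p mu lam F1 x \<omega> - uinf_p mu lam F2 x \<omega>"
  unfolding uinf_p_def dotc_diff right_diff_distrib
  by (intro Bochner_Integration.integral_diff integrable_exp_mult integrable_dotc assms) measurable

lemma uinf_s_diff:
  assumes "\<And>j. integrable lborel (\<lambda>y. F1 y $ j)" and "\<And>j. integrable lborel (\<lambda>y. F2 y $ j)"
  shows "uinf_s mu (\<lambda>y. F1 y - F2 y) x \<omega> = uinf_s mu F1 x \<omega> - uinf_s mu F2 x \<omega>"
  unfolding uinf_s_def dotc_diff right_diff_distrib
  by (intro Bochner_Integration.integral_diff integrable_exp_mult integrable_dotc assms) measurable

lemma uinf_p_eq_if_phaseless_eq:
  assumes indep: "\<forall>a b :: real. a *\<^sub>R (\<tau>2 - \<tau>1) + b *\<^sub>R (\<tau>3 - \<tau>1) = 0 \<longrightarrow> a = 0 \<and> b = 0"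
    and "q \<bullet> x \<noteq> 0"
    and eq: "\<And>\<tau>. \<tau> \<in> {\<tau>1, \<tau>2, \<tau>3} \<Longrightarrow> norm (uinf_pz mu lam F1 z x q \<omega> \<tau>) = norm (uinf_pz mu lam F2 z x q \<omega> \<tau>)"
  shows "uinf_p mu lam F1 x \<omega> = uinf_p mu lam F2 x \<omega>"
  by (rule phase_retrieval[OF indep, where b = "exp (- \<i> * of_real (kp mu lam \<omega> * (x \<bullet> z))) * of_real (q \<bullet> x)"])
    (use \<open>q \<bullet> x \<noteq> 0\<close> eq in \<open>auto simp: uinf_pz_def mult.assoc\<close>)

lemma uinf_s_eq_if_phaseless_eq:
  assumes indep: "\<forall>a b :: real. a *\<^sub>R (\<tau>2 - \<tau>1) + b *\<^sub>R (\<tau>3 - \<tau>1) = 0 \<longrightarrow> a = 0 \<and> b = 0"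
    and "q \<bullet> perp x \<noteq> 0"
    and eq: "\<And>\<tau>. \<tau> \<in> {\<tau>1, \<tau>2, \<tau>3} \<Longrightarrow> norm (uinf_sz mu F1 z x q \<omega> \<tau>) = norm (uinf_sz mu F2 z x q \<omega> \<tau>)"
  shows "uinf_s mu F1 x \<omega> = uinf_s mu F2 x \<omega>"
  by (rule phase_retrieval[OF indep, where b = "exp (- \<i> * of_real (ks mu \<omega> * (x \<bullet> z))) * of_real (q \<bullet> perp x)"])
    (use \<open>q \<bullet> perp x \<noteq> 0\<close> eq in \<open>auto simp: uinf_sz_def mult.assoc\<close>)

lemma inner_moments_eq_0_if_fourier_eq_0:
  fixes G :: "real^2 \<Rightarrow> complex^2"
  assumes G: "\<And>j. integrable lborel (\<lambda>y. G y $ j)" and S: "bounded S" and supp: "\<forall>y. y \<notin> S \<longrightarrow> G y = 0"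
    and "c > 0" and "a < b"
    and zero: "\<And>\<omega>. a < \<omega> \<Longrightarrow> \<omega> < b
                 \<Longrightarrow> (LINT y|lborel. exp (- \<i> * of_real (\<omega> / c * (x \<bullet> y))) * dotc v (G y)) = 0"
  shows "(LINT y|lborel. of_real (x \<bullet> y) ^ n * dotc v (G y)) = 0"
proof -
  obtain B where B: "\<forall>y\<in>S. norm y \<le> B"
    using S by (auto simp: bounded_iff)
  show ?thesis
  proof (rule moments_eq_0_if_fourier_eq_0_on_interval[where R = "norm x * B" and a = "a / c" and b = "b / c"])
    show "integrable lborel (\<lambda>y. dotc v (G y))"
      using G by (rule integrable_dotc)
    show "(\<lambda>y. x \<bullet> y) \<in> borel_measurable lborel"
      by measurable
    show "\<bar>x \<bullet> y\<bar> \<le> norm x * B" if "dotc v (G y) \<noteq> 0" for y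
    proof -
      have "y \<in> S"
        using that supp by (auto simp: dotc_def)
      then show ?thesis
        using Cauchy_Schwarz_ineq2[of x y] B mult_left_mono[of "norm y" B "norm x"] by force
    qed
    show "a / c < b / c"
      using \<open>a < b\<close> \<open>c > 0\<close> by (simp add: divide_strict_right_mono)
    show "(LINT y|lborel. exp (- \<i> * of_real (t * (x \<bullet> y))) * dotc v (G y)) = 0"
      if "a / c < t" "t < b / c" for t
      using zero[of "t * c"] that \<open>c > 0\<close> by (simp add: field_simps)
  qed
qed

lemma integral_inner_power_dotc:
  fixes G :: "real^2 \<Rightarrow> complex^2"
  assumes G: "\<And>j. integrable lborel (\<lambda>y. G y $ j)" and S: "bounded S" and supp: "\<forall>y. y \<notin> S \<longrightarrow> G y = 0"
  shows "(LINT y|lborel. of_real (x \<bullet> y) ^ n * dotc v (G y))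
    = of_real (v$1) * binomial_form (monomial_moment (\<lambda>y. G y $ 1)) n (of_real (x$1)) (of_real (x$2))
    + of_real (v$2) * binomial_form (monomial_moment (\<lambda>y. G y $ 2)) n (of_real (x$1)) (of_real (x$2))"
proof -
  have supp_j: "\<forall>y. y \<notin> S \<longrightarrow> G y $ j = 0" for j
    using supp by simp
  have int: "integrable lborel (\<lambda>y. of_real (x \<bullet> y) ^ n * G y $ j)" for j
    by (intro integrable_continuous_mult_bounded_support[OF G S supp_j] continuous_intros)
  have "(LINT y|lborel. of_real (x \<bullet> y) ^ n * dotc v (G y))
      = (LINT y|lborel. of_real (v$1) * (of_real (x \<bullet> y) ^ n * G y $ 1)
                      + of_real (v$2) * (of_real (x \<bullet> y) ^ n * G y $ 2))"
    by (simp add: dotc_def algebra_simps)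
  also have "\<dots> = of_real (v$1) * (LINT y|lborel. of_real (x \<bullet> y) ^ n * G y $ 1)
                  + of_real (v$2) * (LINT y|lborel. of_real (x \<bullet> y) ^ n * G y $ 2)"
    using int by simp
  finally show ?thesis
    by (simp add: integral_inner_power_eq_binomial_form[OF G S supp_j])
qed

lemma monomial_moments_eq_0_if_inner_moments_eq_0_on_arcs:
  fixes G :: "real^2 \<Rightarrow> complex^2" and q :: "real^2"
  assumes G: "\<And>j. integrable lborel (\<lambda>y. G y $ j)" and S: "bounded S" and supp: "\<forall>y. y \<notin> S \<longrightarrow> G y = 0"
    and q: "q \<in> sphere 0 1"
    and zero_p: "\<And>x n. x \<in> S_q q \<Longrightarrow> (LINT y|lborel. of_real (x \<bullet> y) ^ n * dotc x (G y)) = 0"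
    and zero_s: "\<And>x n. x \<in> Sperp_q q \<Longrightarrow> (LINT y|lborel. of_real (x \<bullet> y) ^ n * dotc (perp x) (G y)) = 0"
  shows "monomial_moment (\<lambda>y. G y $ j) i k = 0"
proof -
  let ?m = "\<lambda>j. monomial_moment (\<lambda>y. G y $ j)"
  note expand = integral_inner_power_dotc[OF G S supp]
  have arc_p: "of_real (x$1) * binomial_form (?m 1) (i + k) (of_real (x$1)) (of_real (x$2))
      + of_real (x$2) * binomial_form (?m 2) (i + k) (of_real (x$1)) (of_real (x$2)) = 0"
    if "x \<in> S_q q" for x
    using zero_p[OF that, of "i + k"] by (simp only: expand)
  have arc_s: "- of_real (x$2) * binomial_form (?m 1) (i + k) (of_real (x$1)) (of_real (x$2))
      + of_real (x$1) * binomial_form (?m 2) (i + k) (of_real (x$1)) (of_real (x$2)) = 0"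
    if "x \<in> Sperp_q q" for x
    using zero_s[OF that, of "i + k"] by (simp add: expand perp_def vector_2)
  from binomial_form_pair_coeffs_eq_0_if_eq_0_on_arcs[OF q arc_p arc_s le_add1]
  have "?m 1 i k = 0 \<and> ?m 2 i k = 0"
    by simp
  then show ?thesis
    using exhaust_2[of j] by auto
qed

lemma p_moments_eq_0_if_phaseless_data_eq:
  fixes F1 F2 :: "real^2 \<Rightarrow> complex^2"
  assumes F1: "\<And>j. integrable lborel (\<lambda>y. F1 y $ j)" and F2: "\<And>j. integrable lborel (\<lambda>y. F2 y $ j)"
    and S: "bounded S" and supp: "\<forall>y. y \<notin> S \<longrightarrow> F1 y = F2 y"
    and lam: "2 * mu + lam > 0" and "\<omega>min < \<omega>max"
    and indep: "\<forall>a b :: real. a *\<^sub>R (\<tau>2 - \<tau>1) + b *\<^sub>R (\<tau>3 - \<tau>1) = 0 \<longrightarrow> a = 0 \<and> b = 0"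
    and "q \<bullet> x \<noteq> 0"
    and data: "\<forall>\<omega> \<in> {\<omega>min<..<\<omega>max}. \<forall>\<tau> \<in> {\<tau>1, \<tau>2, \<tau>3}.
                 norm (uinf_pz mu lam F1 z x q \<omega> \<tau>) = norm (uinf_pz mu lam F2 z x q \<omega> \<tau>)"
  shows "(LINT y|lborel. of_real (x \<bullet> y) ^ n * dotc x (F1 y - F2 y)) = 0"
proof (rule inner_moments_eq_0_if_fourier_eq_0[where G = "\<lambda>y. F1 y - F2 y", OF _ S _ _ \<open>\<omega>min < \<omega>max\<close>])
  fix \<omega> assume "\<omega>min < \<omega>" "\<omega> < \<omega>max"
  then have "uinf_p mu lam F1 x \<omega> = uinf_p mu lam F2 x \<omega>"
    using data by (intro uinf_p_eq_if_phaseless_eq[OF indep \<open>q \<bullet> x \<noteq> 0\<close>]) auto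
  then show "(LINT y|lborel. exp (- \<i> * of_real (\<omega> / sqrt (lam + 2 * mu) * (x \<bullet> y))) * dotc x (F1 y - F2 y)) = 0"
    using uinf_p_diff[OF F1 F2] by (simp add: uinf_p_def kp_def)
qed (use F1 F2 supp lam in simp_all)

lemma s_moments_eq_0_if_phaseless_data_eq:
  fixes F1 F2 :: "real^2 \<Rightarrow> complex^2"
  assumes F1: "\<And>j. integrable lborel (\<lambda>y. F1 y $ j)" and F2: "\<And>j. integrable lborel (\<lambda>y. F2 y $ j)"
    and S: "bounded S" and supp: "\<forall>y. y \<notin> S \<longrightarrow> F1 y = F2 y"
    and mu: "mu > 0" and "\<omega>min < \<omega>max"
    and indep: "\<forall>a b :: real. a *\<^sub>R (\<tau>2 - \<tau>1) + b *\<^sub>R (\<tau>3 - \<tau>1) = 0 \<longrightarrow> a = 0 \<and> b = 0"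
    and "q \<bullet> perp x \<noteq> 0"
    and data: "\<forall>\<omega> \<in> {\<omega>min<..<\<omega>max}. \<forall>\<tau> \<in> {\<tau>1, \<tau>2, \<tau>3}.
                 norm (uinf_sz mu F1 z x q \<omega> \<tau>) = norm (uinf_sz mu F2 z x q \<omega> \<tau>)"
  shows "(LINT y|lborel. of_real (x \<bullet> y) ^ n * dotc (perp x) (F1 y - F2 y)) = 0"
proof (rule inner_moments_eq_0_if_fourier_eq_0[where G = "\<lambda>y. F1 y - F2 y", OF _ S _ _ \<open>\<omega>min < \<omega>max\<close>])
  fix \<omega> assume "\<omega>min < \<omega>" "\<omega> < \<omega>max"
  then have "uinf_s mu F1 x \<omega> = uinf_s mu F2 x \<omega>"
    using data by (intro uinf_s_eq_if_phaseless_eq[OF indep \<open>q \<bullet> perp x \<noteq> 0\<close>]) auto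
  then show "(LINT y|lborel. exp (- \<i> * of_real (\<omega> / sqrt mu * (x \<bullet> y))) * dotc (perp x) (F1 y - F2 y)) = 0"
    using uinf_s_diff[OF F1 F2] by (simp add: uinf_s_def ks_def)
qed (use F1 F2 supp mu in simp_all)

theorem theorem3p4:
  fixes mu lam \<omega>min \<omega>max :: real
    and \<Omega> :: "(real^2) set"
    and F1 F2 :: "real^2 \<Rightarrow> complex^2"
    and \<tau>1 \<tau>2 \<tau>3 :: complex
    and z q :: "real^2"
  assumes mu: "mu > 0" and lam: "2 * mu + lam > 0"
    and W: "0 < \<omega>min" "\<omega>min < \<omega>max"
    and dom: "open \<Omega>" "connected \<Omega>" "bounded \<Omega>" "\<Omega> \<noteq> {}"
    and F1: "L2_field F1" "\<forall>y. y \<notin> \<Omega> \<longrightarrow> F1 y = 0"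
    and F2: "L2_field F2" "\<forall>y. y \<notin> \<Omega> \<longrightarrow> F2 y = 0"
    and tau_dist: "\<tau>1 \<noteq> \<tau>2" "\<tau>1 \<noteq> \<tau>3" "\<tau>2 \<noteq> \<tau>3"
    and tau_indep: "\<forall>a b :: real. a *\<^sub>R (\<tau>2 - \<tau>1) + b *\<^sub>R (\<tau>3 - \<tau>1) = 0 \<longrightarrow> a = 0 \<and> b = 0"
    and z: "z \<notin> closure \<Omega>"
    and q: "q \<in> sphere 0 1"
    and Dp: "\<forall>x \<in> S_q q. \<forall>\<omega> \<in> {\<omega>min<..<\<omega>max}. \<forall>\<tau> \<in> {\<tau>1, \<tau>2, \<tau>3}.
               norm (uinf_pz mu lam F1 z x q \<omega> \<tau>) = norm (uinf_pz mu lam F2 z x q \<omega> \<tau>)"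
    and Ds: "\<forall>x \<in> Sperp_q q. \<forall>\<omega> \<in> {\<omega>min<..<\<omega>max}. \<forall>\<tau> \<in> {\<tau>1, \<tau>2, \<tau>3}.
               norm (uinf_sz mu F1 z x q \<omega> \<tau>) = norm (uinf_sz mu F2 z x q \<omega> \<tau>)"
  shows "AE y in lborel. F1 y = F2 y"
proof -
  \<comment> \<open>The distinctness of the \<open>\<tau>\<close>'s follows from their affine independence.\<close>
  have F_int: "integrable lborel (\<lambda>y. F y $ j)" if "L2_field F" "\<forall>y. y \<notin> \<Omega> \<longrightarrow> F y = 0" for F j
    using that dom(1,3) by (intro integrable_nth_if_L2_field) auto
  define G where "G y = F1 y - F2 y" for y
  have G_int: "integrable lborel (\<lambda>y. G y $ j)" for j
    using F_int[OF F1] F_int[OF F2] by (simp add: G_def)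
  have G_supp: "\<forall>y. y \<notin> \<Omega> \<longrightarrow> G y = 0"
    using F1(2) F2(2) by (simp add: G_def)
  have "monomial_moment (\<lambda>y. G y $ j) i k = 0" for j i k
  proof (rule monomial_moments_eq_0_if_inner_moments_eq_0_on_arcs[OF G_int dom(3) G_supp q])
    show "(LINT y|lborel. of_real (x \<bullet> y) ^ n * dotc x (G y)) = 0" if "x \<in> S_q q" for x n
      using that Dp F1(2) F2(2) unfolding G_def
      by (intro p_moments_eq_0_if_phaseless_data_eq[OF F_int[OF F1] F_int[OF F2] dom(3) _ lam W(2) tau_indep])
        (auto simp: S_q_def)
    show "(LINT y|lborel. of_real (x \<bullet> y) ^ n * dotc (perp x) (G y)) = 0" if "x \<in> Sperp_q q" for x n
      using that Ds F1(2) F2(2) unfolding G_def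
      by (intro s_moments_eq_0_if_phaseless_data_eq[OF F_int[OF F1] F_int[OF F2] dom(3) _ mu W(2) tau_indep])
        (auto simp: Sperp_q_def)
  qed
  then have "AE y in lborel. G y $ j = 0" for j
    by (intro AE_eq_0_if_monomial_moments_eq_0[OF G_int dom(3)]) (auto simp: G_supp)
  then have "AE y in lborel. G y $ 1 = 0 \<and> G y $ 2 = 0"
    by (simp add: AE_conj_iff)
  then show ?thesis
    by eventually_elim (simp add: G_def vec_eq_iff forall_2)
qed

end
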